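(* Let $G_1,G_2$ be groups with finite generating sets $S_1,S_2$ respectively (each symmetric and not containing the identity), and let $S=(S_1\times\{e\})\cup(\{e\}\times S_2)$ be the split generating set of $G_1\times G_2$. Then for all $(x,y)\in G_1\times G_2$, $$\mathrm{Av}((x,y))=\frac{|S_1|\,\mathrm{Av}(x)+|S_1|\,|y|+|S_2|\,|x|+|S_2|\,\mathrm{Av}(y)}{|S_1|+|S_2|},$$ where $\mathrm{Av}((x,y))$ is computed in $(G_1\times G_2,S)$, $\mathrm{Av}(x)$ and $|x|$ in $(G_1,S_1)$, and $\mathrm{Av}(y)$ and $|y|$ in $(G_2,S_2)$.
   Context: For a group $G$ with finite generating set $S$, $|x|$ denotes the word length of $x$ with respect to $S$, and $\mathrm{Av}(g)=\frac{1}{|S|}\sum_{a\in S}|a^{-1}ga|$. *)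

theory Defs
  imports "HOL-Algebra.Algebra"
begin

text \<open>Word length of x in group G w.r.t. generating set S (S symmetric, so
words over S suffice): least number of generators whose product is x.\<close>
definition word_length :: "('a, 'b) monoid_scheme \<Rightarrow> 'a set \<Rightarrow> 'a \<Rightarrow> nat" where
  "word_length G S x =
     (LEAST n. \<exists>ws. length ws = n \<and> set ws \<subseteq> S \<and> x = foldr (\<otimes>\<^bsub>G\<^esub>) ws \<one>\<^bsub>G\<^esub>)"

definition Av :: "('a, 'b) monoid_scheme \<Rightarrow> 'a set \<Rightarrow> 'a \<Rightarrow> real" where
  "Av G S g = (\<Sum>a\<in>S. real (word_length G S (inv\<^bsub>G\<^esub> a \<otimes>\<^bsub>G\<^esub> g \<otimes>\<^bsub>G\<^esub> a))) / real (card S)"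

definition fin_sym_gen_set :: "('a, 'b) monoid_scheme \<Rightarrow> 'a set \<Rightarrow> bool" where
  "fin_sym_gen_set G S \<longleftrightarrow> finite S \<and> S \<subseteq> carrier G \<and> \<one>\<^bsub>G\<^esub> \<notin> S
     \<and> (\<forall>s\<in>S. inv\<^bsub>G\<^esub> s \<in> S) \<and> generate G S = carrier G"

end

theory Submission
  imports Defs
begin

text \<open>A conjugate of (x, y) by a generator of the split set changes only one coordinate, and
  word length in the split generating set is additive over the coordinates: a word for (x, y)
  splits into its letters from each factor, and conversely words for x and y concatenate.
  Summing over the generators of each factor gives the formula.\<close>

abbreviation word_prod :: "('a, 'b) monoid_scheme \<Rightarrow> 'a list \<Rightarrow> 'a" where
  "word_prod G ws \<equiv> foldr (\<otimes>\<^bsub>G\<^esub>) ws \<one>\<^bsub>G\<^esub>"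

abbreviation split_gens ::
    "('a, 'c) monoid_scheme \<Rightarrow> ('b, 'd) monoid_scheme \<Rightarrow> 'a set \<Rightarrow> 'b set \<Rightarrow> ('a \<times> 'b) set" where
  "split_gens G1 G2 S1 S2 \<equiv> (\<lambda>s. (s, \<one>\<^bsub>G2\<^esub>)) ` S1 \<union> (\<lambda>s. (\<one>\<^bsub>G1\<^esub>, s)) ` S2"

lemma (in monoid) word_prod_closed:
  "set ws \<subseteq> carrier G \<Longrightarrow> word_prod G ws \<in> carrier G"
  by (induction ws) auto

lemma (in monoid) word_prod_append:
  assumes "set ws \<subseteq> carrier G" "set vs \<subseteq> carrier G"
  shows "word_prod G (ws @ vs) = word_prod G ws \<otimes> word_prod G vs"
  using assms(1)
proof (induction ws)
  case Nil
  then show ?case using word_prod_closed[OF assms(2)] by simp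
next
  case (Cons a ws)
  then show ?case using word_prod_closed[OF assms(2)] word_prod_closed[of ws] by (simp add: m_assoc)
qed

lemma (in group) word_prod_exists:
  assumes "S \<subseteq> carrier G" "\<And>s. s \<in> S \<Longrightarrow> inv s \<in> S" "x \<in> generate G S"
  shows "\<exists>ws. set ws \<subseteq> S \<and> x = word_prod G ws"
  using assms(3)
proof (induction rule: generate.induct)
  case one
  show ?case by (rule exI[of _ "[]"]) simp
next
  case (incl h)
  then show ?case using assms(1) by (intro exI[of _ "[h]"]) auto
next
  case (inv h)
  then show ?case using assms by (intro exI[of _ "[inv h]"]) auto
next
  case (eng h1 h2)
  then obtain w1 w2 where "set w1 \<subseteq> S" "h1 = word_prod G w1" "set w2 \<subseteq> S" "h2 = word_prod G w2"
    by blast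
  then show ?case using assms(1)
    by (intro exI[of _ "w1 @ w2"]) (auto simp: word_prod_append simp del: foldr_append)
qed

lemma word_length_le:
  "set ws \<subseteq> S \<Longrightarrow> x = word_prod G ws \<Longrightarrow> word_length G S x \<le> length ws"
  unfolding word_length_def by (intro Least_le) blast

lemma word_length_witness:
  assumes "set ws \<subseteq> S" "x = word_prod G ws"
  obtains vs where "length vs = word_length G S x" "set vs \<subseteq> S" "x = word_prod G vs"
proof -
  have "\<exists>vs. length vs = word_length G S x \<and> set vs \<subseteq> S \<and> x = word_prod G vs"
    unfolding word_length_def by (rule LeastI_ex) (use assms in blast)
  with that show ?thesis by blast
qed

lemma word_length_attained:
  assumes "group G" "fin_sym_gen_set G S" "x \<in> carrier G"
  obtains ws where "length ws = word_length G S x" "set ws \<subseteq> S" "x = word_prod G ws"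
proof -
  have "\<exists>ws. set ws \<subseteq> S \<and> x = word_prod G ws"
    using assms by (intro group.word_prod_exists) (auto simp: fin_sym_gen_set_def)
  then obtain ws where "set ws \<subseteq> S" "x = word_prod G ws" by blast
  then show ?thesis by (rule word_length_witness) (rule that)
qed

lemma word_length_mult_gen_le:
  assumes "group G" "fin_sym_gen_set G S" "z \<in> carrier G" "s \<in> S"
  shows "word_length G S (s \<otimes>\<^bsub>G\<^esub> z) \<le> Suc (word_length G S z)"
proof -
  obtain ws where "length ws = word_length G S z" "set ws \<subseteq> S" "z = word_prod G ws"
    using word_length_attained[OF assms(1-3)] .
  then have "word_length G S (s \<otimes>\<^bsub>G\<^esub> z) \<le> length (s # ws)"
    using assms(4) by (intro word_length_le) auto
  then show ?thesis using \<open>length ws = word_length G S z\<close> by simp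
qed

lemma word_length_one: "word_length G S \<one>\<^bsub>G\<^esub> = 0"
  using word_length_le[of "[]" S "\<one>\<^bsub>G\<^esub>" G] by simp

lemma word_length_split_gens_lower:
  assumes G1: "group G1" and G2: "group G2"
    and S1: "fin_sym_gen_set G1 S1" and S2: "fin_sym_gen_set G2 S2"
    and ws: "set ws \<subseteq> split_gens G1 G2 S1 S2"
  shows "word_length G1 S1 (fst (word_prod (G1 \<times>\<times> G2) ws))
       + word_length G2 S2 (snd (word_prod (G1 \<times>\<times> G2) ws)) \<le> length ws"
  using ws
proof (induction ws)
  case Nil
  then show ?case by (simp add: word_length_one)
next
  case (Cons p ws)
  have "set ws \<subseteq> carrier (G1 \<times>\<times> G2)"
    using Cons.prems S1 S2 G1 G2 by (auto simp: fin_sym_gen_set_def group.is_monoid monoid.one_closed)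
  then obtain a b where ab: "word_prod (G1 \<times>\<times> G2) ws = (a, b)" "a \<in> carrier G1" "b \<in> carrier G2"
    using monoid.word_prod_closed[OF group.is_monoid[OF DirProd_group[OF G1 G2]]] by fastforce
  have IH: "word_length G1 S1 a + word_length G2 S2 b \<le> length ws" using Cons ab by auto
  from Cons.prems consider s where "s \<in> S1" "p = (s, \<one>\<^bsub>G2\<^esub>)" | t where "t \<in> S2" "p = (\<one>\<^bsub>G1\<^esub>, t)"
    by auto
  then show ?case
  proof cases
    case 1
    then have prod: "word_prod (G1 \<times>\<times> G2) (p # ws) = (s \<otimes>\<^bsub>G1\<^esub> a, b)"
      using ab G2 by (simp add: group.is_monoid monoid.l_one)
    show ?thesis
      unfolding prod fst_conv snd_conv length_Cons using word_length_mult_gen_le[OF G1 S1 ab(2) 1(1)] IH by linarith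
  next
    case 2
    then have prod: "word_prod (G1 \<times>\<times> G2) (p # ws) = (a, t \<otimes>\<^bsub>G2\<^esub> b)"
      using ab G1 by (simp add: group.is_monoid monoid.l_one)
    show ?thesis
      unfolding prod fst_conv snd_conv length_Cons using word_length_mult_gen_le[OF G2 S2 ab(3) 2(1)] IH by linarith
  qed
qed

lemma word_prod_DirProd_left:
  "monoid G2 \<Longrightarrow> b \<in> carrier G2 \<Longrightarrow>
    foldr (\<otimes>\<^bsub>G1 \<times>\<times> G2\<^esub>) (map (\<lambda>s. (s, \<one>\<^bsub>G2\<^esub>)) ws) (a, b) = (foldr (\<otimes>\<^bsub>G1\<^esub>) ws a, b)"
  by (induction ws) (auto simp: monoid.l_one)

lemma word_prod_DirProd_right:
  "monoid G1 \<Longrightarrow> a \<in> carrier G1 \<Longrightarrow>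
    foldr (\<otimes>\<^bsub>G1 \<times>\<times> G2\<^esub>) (map (\<lambda>t. (\<one>\<^bsub>G1\<^esub>, t)) ws) (a, c) = (a, foldr (\<otimes>\<^bsub>G2\<^esub>) ws c)"
  by (induction ws) (auto simp: monoid.l_one)

lemma word_length_split_gens:
  assumes G1: "group G1" and G2: "group G2"
    and S1: "fin_sym_gen_set G1 S1" and S2: "fin_sym_gen_set G2 S2"
    and x: "x \<in> carrier G1" and y: "y \<in> carrier G2"
  shows "word_length (G1 \<times>\<times> G2) (split_gens G1 G2 S1 S2) (x, y)
    = word_length G1 S1 x + word_length G2 S2 y"
proof (rule antisym)
  let ?S = "split_gens G1 G2 S1 S2"
  have m1: "monoid G1" and m2: "monoid G2" using G1 G2 by (auto simp: group.is_monoid)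
  obtain w1 where w1: "length w1 = word_length G1 S1 x" "set w1 \<subseteq> S1" "x = word_prod G1 w1"
    using word_length_attained[OF G1 S1 x] .
  obtain w2 where w2: "length w2 = word_length G2 S2 y" "set w2 \<subseteq> S2" "y = word_prod G2 w2"
    using word_length_attained[OF G2 S2 y] .
  define w where "w = map (\<lambda>s. (s, \<one>\<^bsub>G2\<^esub>)) w1 @ map (\<lambda>t. (\<one>\<^bsub>G1\<^esub>, t)) w2"
  have w_eval: "(x, y) = word_prod (G1 \<times>\<times> G2) w"
    unfolding w_def using word_prod_DirProd_left[OF m2 y, of G1 w1]
      word_prod_DirProd_right[OF m1 monoid.one_closed[OF m1], of G2 w2] w1(3) w2(3) by simp
  have w_set: "set w \<subseteq> ?S" using w1(2) w2(2) unfolding w_def by auto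
  have "length w = word_length G1 S1 x + word_length G2 S2 y"
    using w1(1) w2(1) unfolding w_def by simp
  then show "word_length (G1 \<times>\<times> G2) ?S (x, y) \<le> word_length G1 S1 x + word_length G2 S2 y"
    using word_length_le[OF w_set w_eval] by simp
  obtain v where v: "length v = word_length (G1 \<times>\<times> G2) ?S (x, y)" "set v \<subseteq> ?S"
    "(x, y) = word_prod (G1 \<times>\<times> G2) v"
    using word_length_witness[OF w_set w_eval] .
  show "word_length G1 S1 x + word_length G2 S2 y \<le> word_length (G1 \<times>\<times> G2) ?S (x, y)"
    using word_length_split_gens_lower[OF G1 G2 S1 S2 v(2)] unfolding v(1) v(3)[symmetric] by simp
qed

lemma sum_split_gens:
  assumes "finite S1" "finite S2" "\<one>\<^bsub>G1\<^esub> \<notin> S1"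
  shows "(\<Sum>p\<in>split_gens G1 G2 S1 S2. f p)
    = (\<Sum>s\<in>S1. f (s, \<one>\<^bsub>G2\<^esub>)) + (\<Sum>t\<in>S2. f (\<one>\<^bsub>G1\<^esub>, t))"
proof -
  have "inj_on (\<lambda>s. (s, \<one>\<^bsub>G2\<^esub>)) S1" "inj_on (\<lambda>t. (\<one>\<^bsub>G1\<^esub>, t)) S2"
    by (auto simp: inj_on_def)
  moreover have "(\<lambda>s. (s, \<one>\<^bsub>G2\<^esub>)) ` S1 \<inter> (\<lambda>t. (\<one>\<^bsub>G1\<^esub>, t)) ` S2 = {}"
    using assms(3) by auto
  ultimately show ?thesis
    using assms(1,2) by (simp add: sum.union_disjoint sum.reindex)
qed

lemma card_split_gens:
  assumes "finite S1" "finite S2" "\<one>\<^bsub>G1\<^esub> \<notin> S1"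
  shows "card (split_gens G1 G2 S1 S2) = card S1 + card S2"
  using sum_split_gens[OF assms, of "\<lambda>_. 1::nat"] by simp

lemma card_mult_Av:
  "real (card S) * Av G S g = (\<Sum>a\<in>S. real (word_length G S (inv\<^bsub>G\<^esub> a \<otimes>\<^bsub>G\<^esub> g \<otimes>\<^bsub>G\<^esub> a)))"
proof (cases "card S = 0")
  case True
  then have "S = {} \<or> infinite S" by auto
  with True show ?thesis unfolding Av_def by auto
next
  case False
  then show ?thesis unfolding Av_def by simp
qed

lemma DirProd_conj_left:
  assumes "group G1" "group G2" "s \<in> carrier G1" "x \<in> carrier G1" "y \<in> carrier G2"
  shows "inv\<^bsub>G1 \<times>\<times> G2\<^esub> (s, \<one>\<^bsub>G2\<^esub>) \<otimes>\<^bsub>G1 \<times>\<times> G2\<^esub> (x, y) \<otimes>\<^bsub>G1 \<times>\<times> G2\<^esub> (s, \<one>\<^bsub>G2\<^esub>)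
    = (inv\<^bsub>G1\<^esub> s \<otimes>\<^bsub>G1\<^esub> x \<otimes>\<^bsub>G1\<^esub> s, y)"
  using assms by (simp add: inv_DirProd group.is_monoid monoid.inv_one)

lemma DirProd_conj_right:
  assumes "group G1" "group G2" "t \<in> carrier G2" "x \<in> carrier G1" "y \<in> carrier G2"
  shows "inv\<^bsub>G1 \<times>\<times> G2\<^esub> (\<one>\<^bsub>G1\<^esub>, t) \<otimes>\<^bsub>G1 \<times>\<times> G2\<^esub> (x, y) \<otimes>\<^bsub>G1 \<times>\<times> G2\<^esub> (\<one>\<^bsub>G1\<^esub>, t)
    = (x, inv\<^bsub>G2\<^esub> t \<otimes>\<^bsub>G2\<^esub> y \<otimes>\<^bsub>G2\<^esub> t)"
  using assms by (simp add: inv_DirProd group.is_monoid monoid.inv_one)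

theorem mainTheorem8:
  fixes G1 :: "('a, 'c) monoid_scheme" and G2 :: "('b, 'd) monoid_scheme"
    and S1 :: "'a set" and S2 :: "'b set" and x :: 'a and y :: 'b
  assumes "group G1" and "group G2"
    and "fin_sym_gen_set G1 S1" and "fin_sym_gen_set G2 S2"
    and "x \<in> carrier G1" and "y \<in> carrier G2"
  shows "Av (G1 \<times>\<times> G2) ((\<lambda>s. (s, \<one>\<^bsub>G2\<^esub>)) ` S1 \<union> (\<lambda>s. (\<one>\<^bsub>G1\<^esub>, s)) ` S2) (x, y)
    = (real (card S1) * Av G1 S1 x + real (card S1) * real (word_length G2 S2 y)
       + real (card S2) * real (word_length G1 S1 x) + real (card S2) * Av G2 S2 y)
      / (real (card S1) + real (card S2))"
proof -
  let ?P = "G1 \<times>\<times> G2" and ?S = "split_gens G1 G2 S1 S2"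
  let ?conj = "\<lambda>G S g a. real (word_length G S (inv\<^bsub>G\<^esub> a \<otimes>\<^bsub>G\<^esub> g \<otimes>\<^bsub>G\<^esub> a))"
  have fin: "finite S1" "finite S2" "\<one>\<^bsub>G1\<^esub> \<notin> S1"
    and gens: "S1 \<subseteq> carrier G1" "S2 \<subseteq> carrier G2"
    using assms(3,4) by (auto simp: fin_sym_gen_set_def)
  have conj_closed: "inv\<^bsub>G\<^esub> a \<otimes>\<^bsub>G\<^esub> g \<otimes>\<^bsub>G\<^esub> a \<in> carrier G"
    if "group G" "a \<in> carrier G" "g \<in> carrier G" for G :: "('e, 'f) monoid_scheme" and a g
    using that by (simp add: group.inv_closed group.is_monoid monoid.m_closed)
  have left: "?conj ?P ?S (x, y) (s, \<one>\<^bsub>G2\<^esub>) = ?conj G1 S1 x s + real (word_length G2 S2 y)"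
    if "s \<in> S1" for s
    using that gens assms conj_closed[OF assms(1)]
    by (simp add: DirProd_conj_left word_length_split_gens subset_iff)
  have right: "?conj ?P ?S (x, y) (\<one>\<^bsub>G1\<^esub>, t) = real (word_length G1 S1 x) + ?conj G2 S2 y t"
    if "t \<in> S2" for t
    using that gens assms conj_closed[OF assms(2)]
    by (simp add: DirProd_conj_right word_length_split_gens subset_iff)
  have "(\<Sum>p\<in>?S. ?conj ?P ?S (x, y) p)
    = real (card S1) * Av G1 S1 x + real (card S1) * real (word_length G2 S2 y)
       + real (card S2) * real (word_length G1 S1 x) + real (card S2) * Av G2 S2 y"
    unfolding sum_split_gens[OF fin] card_mult_Av by (simp add: left right sum.distrib)
  then show ?thesis
    unfolding Av_def[of ?P] card_split_gens[OF fin] by simp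
qed

end
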